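(* Consider a peer-to-peer overlay network (as described in the context) under unlimited adversarial churn. If the overlay topology maintained by an algorithm is not a complete (fully connected) graph, then there does not exist an algorithm that maintains this topology and is resilient against (i.e., correctly handles) unlimited adversarial churn.
   Context: A peer-to-peer overlay network is a set of processes with unique identifiers communicating by asynchronous message passing over FIFO channels of unlimited capacity. A process $a$ is a neighbor of process $b$ if $b$ stores the identifier of $a$ in its memory; a process may send messages (point-to-point only, no broadcast) only to processes whose identifiers it stores, message routing being done by the underlay. An algorithm maintains a particular overlay topology (a graph on the current processes given by the neighbor relation). Since connectivity is maintained only by stored identifiers, once the overlay network becomes disconnected it cannot reconnect; hence a correct algorithm must never let the overlay network become disconnected, whether through its own actions or through churn. Churn is the joining and leaving of processes. In adversarial churn, a leaving process simply exits the overlay network without taking any further algorithm steps (messages in its incoming channels are lost). Churn is unlimited if the number of concurrent churn requests (joins/leaves) is not bounded by any constant, known or unknown to the algorithm; in particular, any set of processes currently in the overlay network may leave concurrently. A cut-set of a topology is a proper subset of the processes whose removal (together with incident edges) disconnects the network. *)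

theory Defs
  imports Main
begin

record ('p, 'l, 'm) conf =
  procs :: "'p set"
  loc   :: "'p \<Rightarrow> 'l"
  chan  :: "'p \<Rightarrow> 'p \<Rightarrow> 'm list"     \<comment> \<open>FIFO channel from first to second process\<close>

text \<open>An algorithm: which identifiers a local state stores, the local state of the
  first process, the local state of a process p joining via contact q, and the
  (nondeterministic) local actions, optionally triggered by receipt of a message,
  producing a new local state and a list of point-to-point messages to send.\<close>

record ('p, 'l, 'm) alg =
  ids        :: "'l \<Rightarrow> 'p set"
  start      :: "'p \<Rightarrow> 'l"
  join_state :: "'p \<Rightarrow> 'p \<Rightarrow> 'l"
  act        :: "'p \<Rightarrow> 'l \<Rightarrow> 'm option \<Rightarrow> ('l \<times> ('p \<times> 'm) list) set"

text \<open>Appending sent messages to the FIFO channels (messages to non-members are lost).\<close>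
fun deliver :: "'p set \<Rightarrow> ('p \<Rightarrow> 'p \<Rightarrow> 'm list) \<Rightarrow> 'p \<Rightarrow> ('p \<times> 'm) list \<Rightarrow> ('p \<Rightarrow> 'p \<Rightarrow> 'm list)" where
  "deliver P ch src [] = ch"
| "deliver P ch src ((d, m) # ms) =
     deliver P (if d \<in> P then ch(src := (ch src)(d := ch src d @ [m])) else ch) src ms"

inductive alg_step :: "('p, 'l, 'm) alg \<Rightarrow> ('p, 'l, 'm) conf \<Rightarrow> ('p, 'l, 'm) conf \<Rightarrow> bool"
  for A where
  recv: "\<lbrakk> p \<in> procs C; chan C q p = m # rest;
           (l', out) \<in> act A p (loc C p) (Some m); fst ` set out \<subseteq> ids A l' \<rbrakk> \<Longrightarrow>
         alg_step A C (C\<lparr> loc := (loc C)(p := l'),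
                          chan := deliver (procs C) ((chan C)(q := (chan C q)(p := rest))) p out \<rparr>)"
| spont: "\<lbrakk> p \<in> procs C; (l', out) \<in> act A p (loc C p) None; fst ` set out \<subseteq> ids A l' \<rbrakk> \<Longrightarrow>
         alg_step A C (C\<lparr> loc := (loc C)(p := l'), chan := deliver (procs C) (chan C) p out \<rparr>)"

text \<open>Leave: an arbitrary (unboundedly large) set S of processes leaves
  concurrently, without taking further steps; messages in their incoming channels are lost.\<close>
inductive churn_step :: "('p, 'l, 'm) alg \<Rightarrow> ('p, 'l, 'm) conf \<Rightarrow> ('p, 'l, 'm) conf \<Rightarrow> bool"
  for A where
  leave: "S \<subseteq> procs C \<Longrightarrow>
          churn_step A C (C\<lparr> procs := procs C - S,
                             chan := (\<lambda>x y. if y \<in> S then [] else chan C x y) \<rparr>)"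
| join: "\<lbrakk> p \<notin> procs C; q \<in> procs C \<rbrakk> \<Longrightarrow>
          churn_step A C (C\<lparr> procs := insert p (procs C),
                             loc := (loc C)(p := join_state A p q),
                             chan := (\<lambda>x y. if x = p \<or> y = p then [] else chan C x y) \<rparr>)"

definition init_conf :: "('p, 'l, 'm) alg \<Rightarrow> ('p, 'l, 'm) conf \<Rightarrow> bool" where
  "init_conf A C \<longleftrightarrow> (\<exists>p. C = \<lparr> procs = {p}, loc = start A, chan = (\<lambda>_ _. []) \<rparr>)"

definition reachable :: "('p, 'l, 'm) alg \<Rightarrow> ('p, 'l, 'm) conf \<Rightarrow> bool" where
  "reachable A C \<longleftrightarrow>
     (\<exists>C0. init_conf A C0 \<and> (\<lambda>X Y. alg_step A X Y \<or> churn_step A X Y)\<^sup>*\<^sup>* C0 C)"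

definition overlay_edges :: "('p, 'l, 'm) alg \<Rightarrow> ('p, 'l, 'm) conf \<Rightarrow> ('p \<times> 'p) set" where
  "overlay_edges A C = {(x, y). x \<in> procs C \<and> y \<in> procs C \<and> x \<noteq> y \<and>
                          (x \<in> ids A (loc C y) \<or> y \<in> ids A (loc C x))}"

definition overlay_connected :: "('p, 'l, 'm) alg \<Rightarrow> ('p, 'l, 'm) conf \<Rightarrow> bool" where
  "overlay_connected A C \<longleftrightarrow> (\<forall>x\<in>procs C. \<forall>y\<in>procs C. (x, y) \<in> (overlay_edges A C)\<^sup>*)"

text \<open>A topology assigns to each (finite) set of processes the edge set of a graph on it.\<close>
type_synonym 'p topology = "'p set \<Rightarrow> ('p \<times> 'p) set"

definition complete_topology :: "'p topology \<Rightarrow> bool" where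
  "complete_topology T \<longleftrightarrow>
     (\<forall>V. finite V \<longrightarrow> (\<forall>x\<in>V. \<forall>y\<in>V. x \<noteq> y \<longrightarrow> (x, y) \<in> T V))"

text \<open>The algorithm maintains T: from every reachable configuration, once churn stops,
  algorithm steps lead to a configuration whose overlay network is T on its process set.\<close>
definition maintains :: "('p, 'l, 'm) alg \<Rightarrow> 'p topology \<Rightarrow> bool" where
  "maintains A T \<longleftrightarrow>
     (\<forall>C. reachable A C \<longrightarrow>
        (\<exists>C'. (alg_step A)\<^sup>*\<^sup>* C C' \<and> overlay_edges A C' = T (procs C')))"

text \<open>Correctly handling unlimited adversarial churn: the overlay network never becomes
  disconnected in any execution (any interleaving of algorithm steps and churn).\<close>
definition resilient_unlimited_churn :: "('p, 'l, 'm) alg \<Rightarrow> bool" where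
  "resilient_unlimited_churn A \<longleftrightarrow> (\<forall>C. reachable A C \<longrightarrow> overlay_connected A C)"

end

theory Submission
  imports Defs
begin

text \<open>Let the algorithm build a process set V on which T lacks the edge between x and y, and
  wait until it has established T. Then neither of x and y stores the other's identifier, so
  if all other processes leave concurrently, the overlay network on the survivors x and y has
  no edge and can never reconnect.\<close>

lemma reachable_step:
  assumes "reachable A C" and "alg_step A C D \<or> churn_step A C D"
  shows "reachable A D"
  using assms unfolding reachable_def by (blast intro: rtranclp.rtrancl_into_rtrancl)

lemma reachable_alg_steps:
  assumes "(alg_step A)\<^sup>*\<^sup>* C D" and "reachable A C"
  shows "reachable A D"
  using assms by (induction rule: rtranclp_induct) (auto intro: reachable_step)

lemma alg_step_procs_eq:
  assumes "alg_step A C D"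
  shows "procs D = procs C"
  using assms by (cases rule: alg_step.cases) simp_all

lemma alg_steps_procs_eq:
  assumes "(alg_step A)\<^sup>*\<^sup>* C D"
  shows "procs D = procs C"
  using assms by (induction rule: rtranclp_induct) (simp_all add: alg_step_procs_eq)

lemma reachable_procs_exists:
  assumes "finite V" and "V \<noteq> {}"
  shows "\<exists>C. reachable A C \<and> procs C = V"
  using assms
proof (induction V rule: finite_ne_induct)
  case (singleton p)
  let ?C = "\<lparr> procs = {p}, loc = start A, chan = (\<lambda>_ _. []) \<rparr>"
  have "reachable A ?C" unfolding reachable_def init_conf_def by blast
  then show ?case by auto
next
  case (insert p F)
  then obtain C where C: "reachable A C" "procs C = F" by blast
  obtain q where "q \<in> F" using insert.hyps(2) by blast
  with C insert.hyps(3) have "churn_step A C (C\<lparr> procs := insert p (procs C),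
      loc := (loc C)(p := join_state A p q),
      chan := (\<lambda>x y. if x = p \<or> y = p then [] else chan C x y) \<rparr>)"
    by (intro churn_step.join) auto
  with C show ?case using reachable_step by fastforce
qed

lemma maintains_reachable_topology:
  assumes "maintains A T" and "finite V" and "V \<noteq> {}"
  obtains C where "reachable A C" and "procs C = V" and "overlay_edges A C = T V"
proof -
  obtain C where C: "reachable A C" "procs C = V"
    using reachable_procs_exists[OF assms(2,3)] by blast
  with assms(1) obtain C' where C': "(alg_step A)\<^sup>*\<^sup>* C C'" "overlay_edges A C' = T (procs C')"
    unfolding maintains_def by blast
  have "reachable A C'" using reachable_alg_steps[OF C'(1) C(1)] .
  moreover have "procs C' = V" using alg_steps_procs_eq[OF C'(1)] C(2) by simp
  ultimately show thesis using that C'(2) by simp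
qed

lemma nonadjacent_pair_not_resilient:
  assumes "reachable A C" and "x \<in> procs C" and "y \<in> procs C" and "x \<noteq> y"
    and "x \<notin> ids A (loc C y)" and "y \<notin> ids A (loc C x)"
  shows "\<not> resilient_unlimited_churn A"
proof
  assume resilient: "resilient_unlimited_churn A"
  define S where "S = procs C - {x, y}"
  define D where "D = C\<lparr> procs := procs C - S, chan := (\<lambda>a b. if b \<in> S then [] else chan C a b) \<rparr>"
  have "churn_step A C D" unfolding D_def S_def by (intro churn_step.leave) auto
  with assms(1) have "overlay_connected A D"
    using resilient reachable_step unfolding resilient_unlimited_churn_def by blast
  moreover have procs_D: "procs D = {x, y}" unfolding D_def S_def using assms(2,3) by auto
  ultimately have "(x, y) \<in> (overlay_edges A D)\<^sup>*" unfolding overlay_connected_def by auto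
  moreover have "overlay_edges A D = {}"
    using assms(5,6) procs_D unfolding overlay_edges_def D_def by auto
  ultimately show False using assms(4) by simp
qed

theorem theorem1:
  fixes T :: "'p topology"
  assumes "\<not> complete_topology T"
  shows "\<not> (\<exists>A :: ('p, 'l, 'm) alg. maintains A T \<and> resilient_unlimited_churn A)"
proof
  assume "\<exists>A :: ('p, 'l, 'm) alg. maintains A T \<and> resilient_unlimited_churn A"
  then obtain A :: "('p, 'l, 'm) alg" where "maintains A T" and "resilient_unlimited_churn A"
    by blast
  obtain V x y where V: "finite V" "x \<in> V" "y \<in> V" "x \<noteq> y" "(x, y) \<notin> T V"
    using assms unfolding complete_topology_def by blast
  obtain C where C: "reachable A C" "procs C = V" "overlay_edges A C = T V"
    using maintains_reachable_topology[OF \<open>maintains A T\<close> V(1)] V(2) by blast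
  have "x \<notin> ids A (loc C y)" and "y \<notin> ids A (loc C x)"
    using V(2-5) unfolding C(3)[symmetric] overlay_edges_def C(2) by simp_all
  then have "\<not> resilient_unlimited_churn A"
    using nonadjacent_pair_not_resilient[OF C(1)] C(2) V(2-4) by simp
  with \<open>resilient_unlimited_churn A\<close> show False by contradiction
qed

end
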